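(* For $n\geq1$ let $\ell_n=\sqrt[n]{n!}$. Then, as $n\to\infty$, $$\frac{\ell_{n+2}}{\ell_{n+1}}+\frac{\ell_n}{\ell_{n+1}}=2-\frac{1}{2n^3}+o\Big(\frac1{n^3}\Big).$$ In particular, the sequence $a_n=\ell_{n+1}-\ell_n$ is eventually strictly decreasing. *)

theory Defs
  imports Complex_Main "HOL-Library.Landau_Symbols"
begin

definition ell :: "nat \<Rightarrow> real" where
  "ell n = root n (fact n)"

end

theory Submission
  imports Defs "HOL-Real_Asymp.Real_Asymp"
begin

text \<open>
  Write \<open>ln (m!) = m ln m - m + \<delta>\<^sub>m\<close>; the Stirling defect \<open>\<delta>\<^sub>m\<close> is only known to lie in
  \<open>[1, (m+1) ln (m+1) - m ln m]\<close>, i.e. it is \<open>O(ln m)\<close>. Since \<open>ln (ell n) = ln (n!) / n\<close>, the two ratios are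
  exactly \<open>exp (a - \<delta> p)\<close> and \<open>exp (b + \<delta> q)\<close> with explicit \<open>a, b\<close> and \<open>p, q \<sim> 1/n\<^sup>2\<close>.
  Linearising in \<open>\<delta>\<close>, the defect enters through \<open>\<delta> (q e\<^sup>b - p e\<^sup>a)\<close>, where the \<open>1/n\<^sup>3\<close> terms cancel,
  so it only contributes \<open>O(ln n / n\<^sup>4)\<close>; the explicit part \<open>e\<^sup>a + e\<^sup>b\<close> expands to \<open>2 - 1/(2n\<^sup>3) + O(1/n\<^sup>4)\<close>.
  As the sum of the ratios is then eventually below 2, \<open>ell (n+2) + ell n < 2 ell (n+1)\<close>.
\<close>

lemma abs_exp_minus_1_minus_le_square:
  fixes x :: real
  assumes "\<bar>x\<bar> \<le> 1"
  shows "\<bar>exp x - 1 - x\<bar> \<le> x\<^sup>2"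
proof -
  have "exp x \<le> 1 + x + x\<^sup>2"
  proof (cases "x \<ge> 0")
    case True
    then show ?thesis using exp_bound assms by simp
  next
    case False
    have pos: "0 < 1 + x + x\<^sup>2"
      using False assms by (simp add: abs_le_iff add_nonneg_pos)
    have "(1 - x) * (1 + x + x\<^sup>2) = 1 + (-x) * x\<^sup>2"
      by (simp add: algebra_simps power2_eq_square)
    also have "1 \<le> \<dots>"
      using False by (simp add: mult_nonpos_nonneg)
    finally have "1 \<le> (1 - x) * (1 + x + x\<^sup>2)" .
    also have "\<dots> \<le> exp (-x) * (1 + x + x\<^sup>2)"
      using exp_ge_add_one_self[of "-x"] pos by (intro mult_right_mono) auto
    finally show ?thesis
      by (simp add: exp_minus divide_simps)
  qed
  then show ?thesis
    using exp_ge_add_one_self[of x] zero_le_power2[of x] unfolding abs_le_iff by linarith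
qed

lemma ln_one_plus_inverse_bounds:
  fixes x :: real
  assumes "0 < x"
  shows "1 / (x + 1) \<le> ln (1 + 1 / x)" and "ln (1 + 1 / x) \<le> 1 / x"
proof -
  have "ln (x / (x + 1)) \<le> x / (x + 1) - 1"
    using assms by (intro ln_le_minus_one) simp
  moreover have "ln (x / (x + 1)) = - ln (1 + 1 / x)"
    using assms by (simp add: ln_div field_simps)
  moreover have "x / (x + 1) - 1 = - (1 / (x + 1))"
    using assms by (simp add: field_simps)
  ultimately show "1 / (x + 1) \<le> ln (1 + 1 / x)" by linarith
  show "ln (1 + 1 / x) \<le> 1 / x"
    using assms by (intro ln_add_one_self_le_self) simp
qed

lemma ln_one_plus_inverse_eq:
  fixes x :: real
  assumes "0 < x"
  shows "ln (1 + 1 / x) = ln (x + 1) - ln x"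
proof -
  have "1 + 1 / x = (x + 1) / x"
    using assms by (simp add: field_simps)
  then show ?thesis
    using assms by (simp add: ln_div)
qed

lemma ln_fact_Suc: "ln (fact (Suc m) :: real) = ln (real m + 1) + ln (fact m)"
  by (simp add: ln_mult add.commute)

lemma ln_fact_bounds:
  assumes "1 \<le> m"
  shows "real m * ln (real m) - real m + 1 \<le> ln (fact m)
           \<and> ln (fact m) \<le> (real m + 1) * ln (real m + 1) - real m"
  using assms
proof (induction m rule: dec_induct)
  case base
  have "1 / 2 \<le> ln (2 :: real)"
    using exp_half_le2 ln_ge_iff[of 2 "1 / 2"] by simp
  then show ?case by simp
next
  case (step m)
  have m: "0 < real m" using step.hyps by simp
  have "ln (real m + 1) - ln (real m) \<le> 1 / real m"
    using ln_one_plus_inverse_bounds(2)[OF m] ln_one_plus_inverse_eq[OF m] by simp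
  then have lower: "real m * (ln (real m + 1) - ln (real m)) \<le> 1"
    using m by (simp add: field_simps)
  have "1 / (real m + 2) \<le> ln (real m + 2) - ln (real m + 1)"
    using ln_one_plus_inverse_bounds(1)[of "real m + 1"] ln_one_plus_inverse_eq[of "real m + 1"] m
    by (simp add: add.assoc)
  then have upper: "1 \<le> (real m + 2) * (ln (real m + 2) - ln (real m + 1))"
    using m by (simp add: field_simps)
  show ?case
    using step.IH lower upper ln_fact_Suc[of m] by (simp del: fact_Suc add: algebra_simps)
qed

definition stirling_defect :: "nat \<Rightarrow> real" where
  "stirling_defect m = ln (fact m) - (real m * ln (real m) - real m)"

lemma stirling_defect_bounds:
  assumes "1 \<le> m"
  shows "1 \<le> stirling_defect m \<and> stirling_defect m \<le> (real m + 1) * ln (real m + 1) - real m * ln (real m)"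
  using ln_fact_bounds[OF assms] unfolding stirling_defect_def by (simp add: algebra_simps)

lemma ell_eq_exp_ln_fact:
  assumes "0 < n"
  shows "ell n = exp (ln (fact n) / real n)"
  using assms unfolding ell_def by (simp add: root_powr_inverse powr_def)

lemma ell_pos: "0 < n \<Longrightarrow> 0 < ell n"
  unfolding ell_def by simp

lemma ell_Suc_div_ell:
  assumes "1 \<le> m"
  shows "ell (Suc m) / ell m
           = exp ((ln (1 + 1 / real m) + 1) / (real m + 1) - stirling_defect m / (real m * (real m + 1)))"
proof -
  have m: "0 < real m" using assms by simp
  have "ell (Suc m) / ell m = exp (ln (fact (Suc m)) / (real m + 1) - ln (fact m) / real m)"
    using assms by (simp add: ell_eq_exp_ln_fact exp_diff add.commute)
  also have "ln (fact (Suc m)) / (real m + 1) - ln (fact m) / real m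
           = (ln (1 + 1 / real m) + 1) / (real m + 1) - stirling_defect m / (real m * (real m + 1))"
    using m unfolding ln_fact_Suc ln_one_plus_inverse_eq[OF m] stirling_defect_def
    by (simp add: divide_simps) (simp add: algebra_simps)
  finally show ?thesis .
qed

lemma ell_div_ell_Suc:
  assumes "1 \<le> m"
  shows "ell m / ell (Suc m) = exp (- 1 / real m + stirling_defect (Suc m) / (real m * (real m + 1)))"
proof -
  have m: "0 < real m" using assms by simp
  have "ell m / ell (Suc m) = exp (ln (fact m) / real m - ln (fact (Suc m)) / (real m + 1))"
    using assms by (simp add: ell_eq_exp_ln_fact exp_diff add.commute)
  also have "ln (fact m) / real m - ln (fact (Suc m)) / (real m + 1)
           = - 1 / real m + stirling_defect (Suc m) / (real m * (real m + 1))"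
    using m unfolding ln_fact_Suc stirling_defect_def
    by (simp add: divide_simps) (simp add: algebra_simps)
  finally show ?thesis .
qed

lemma exp_perturbation_bound:
  fixes a b d D p q :: real
  assumes "0 \<le> p" "p \<le> q" "0 \<le> d" "d \<le> D" "D * q \<le> 1"
  shows "\<bar>exp (a - d * p) + exp (b + d * q) - (exp a + exp b)\<bar>
           \<le> D * \<bar>q * exp b - p * exp a\<bar> + exp a * (D * p)\<^sup>2 + exp b * (D * q)\<^sup>2"
proof -
  have dp: "0 \<le> d * p" "d * p \<le> 1" and dq: "0 \<le> d * q" "d * q \<le> 1"
    using assms mult_mono[of d D p q] mult_right_mono[of d D q] by auto
  have "\<bar>exp (- (d * p)) - 1 - - (d * p)\<bar> \<le> (d * p)\<^sup>2"
    using abs_exp_minus_1_minus_le_square[of "- (d * p)"] dp by simp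
  also have "\<dots> \<le> (D * p)\<^sup>2"
    using assms by (intro power_mono mult_right_mono) auto
  finally have rem_p: "\<bar>exp (- (d * p)) - 1 - - (d * p)\<bar> \<le> (D * p)\<^sup>2" .
  have "\<bar>exp (d * q) - 1 - d * q\<bar> \<le> (d * q)\<^sup>2"
    using dq by (intro abs_exp_minus_1_minus_le_square) simp
  also have "\<dots> \<le> (D * q)\<^sup>2"
    using assms by (intro power_mono mult_right_mono) auto
  finally have rem_q: "\<bar>exp (d * q) - 1 - d * q\<bar> \<le> (D * q)\<^sup>2" .
  have "exp (a - d * p) + exp (b + d * q) - (exp a + exp b)
      = d * (q * exp b - p * exp a) + exp a * (exp (- (d * p)) - 1 - - (d * p))
        + exp b * (exp (d * q) - 1 - d * q)"
    by (simp add: mult_exp_exp algebra_simps)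
  also have "\<bar>\<dots>\<bar> \<le> \<bar>d * (q * exp b - p * exp a)\<bar> + \<bar>exp a * (exp (- (d * p)) - 1 - - (d * p))\<bar>
        + \<bar>exp b * (exp (d * q) - 1 - d * q)\<bar>"
    by arith
  also have "\<dots> = d * \<bar>q * exp b - p * exp a\<bar> + exp a * \<bar>exp (- (d * p)) - 1 - - (d * p)\<bar>
        + exp b * \<bar>exp (d * q) - 1 - d * q\<bar>"
    using assms by (simp add: abs_mult)
  also have "\<dots> \<le> D * \<bar>q * exp b - p * exp a\<bar> + exp a * (D * p)\<^sup>2 + exp b * (D * q)\<^sup>2"
    using assms rem_p rem_q by (intro add_mono mult_mono) auto
  finally show ?thesis .
qed

lemma ell_ratio_sum_expansion:
  "(\<lambda>n. ell (n + 2) / ell (n + 1) + ell n / ell (n + 1) - (2 - 1 / (2 * real n ^ 3)))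
     \<in> o(\<lambda>n. 1 / real n ^ 3)"
proof -
  define a where "a n = (ln (1 + 1 / (real n + 1)) + 1) / (real n + 2)" for n
  define b where "b n = - 1 / real n" for n
  define p where "p n = 1 / ((real n + 1) * (real n + 2))" for n
  define q where "q n = 1 / (real n * (real n + 1))" for n
  define D where "D n = (real n + 2) * ln (real n + 2) - (real n + 1) * ln (real n + 1)" for n
  define E where "E n = ell (n + 2) / ell (n + 1) + ell n / ell (n + 1)" for n
  define M where "M n = exp (a n) + exp (b n)" for n
  define B where "B n = D n * \<bar>q n * exp (b n) - p n * exp (a n)\<bar>
                          + exp (a n) * (D n * p n)\<^sup>2 + exp (b n) * (D n * q n)\<^sup>2" for n
  have "eventually (\<lambda>n. D n * q n \<le> 1) at_top"
    unfolding D_def q_def by real_asymp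
  then have "eventually (\<lambda>n. norm (E n - M n) \<le> 1 * norm (B n)) at_top"
    using eventually_ge_at_top[of 1]
  proof eventually_elim
    case (elim n)
    define d where "d = stirling_defect (n + 1)"
    have E_exp: "E n = exp (a n - d * p n) + exp (b n + d * q n)"
      using ell_Suc_div_ell[of "n + 1"] ell_div_ell_Suc[of n] elim(2)
      unfolding E_def a_def b_def p_def q_def d_def by (simp add: add_ac)
    have d: "0 \<le> d" "d \<le> D n"
      using stirling_defect_bounds[of "n + 1"] unfolding d_def D_def by (simp_all add: add_ac)
    have "0 \<le> p n" "p n \<le> q n"
      using elim(2) unfolding p_def q_def by (auto intro!: divide_left_mono mult_mono mult_pos_pos)
    then have "\<bar>E n - (exp (a n) + exp (b n))\<bar> \<le> B n"
      unfolding E_exp B_def using d elim(1) by (intro exp_perturbation_bound) auto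
    then show ?case by (simp add: M_def)
  qed
  then have "(\<lambda>n. E n - M n) \<in> o(\<lambda>n. 1 / real n ^ 3)"
  proof (rule landau_o.big_small_trans[OF bigoI])
    show "B \<in> o(\<lambda>n. 1 / real n ^ 3)"
      unfolding B_def a_def b_def p_def q_def D_def by real_asymp
  qed
  moreover have "(\<lambda>n. M n - (2 - 1 / (2 * real n ^ 3))) \<in> o(\<lambda>n. 1 / real n ^ 3)"
    unfolding M_def a_def b_def by real_asymp
  ultimately have "(\<lambda>n. (E n - M n) + (M n - (2 - 1 / (2 * real n ^ 3)))) \<in> o(\<lambda>n. 1 / real n ^ 3)"
    by (rule sum_in_smallo)
  then show ?thesis
    by (simp add: E_def algebra_simps)
qed

lemma eventually_less_of_smallo_expansion:
  fixes f g :: "'a \<Rightarrow> real"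
  assumes "(\<lambda>x. f x - (c - k * g x)) \<in> o[F](g)" and "0 < k" and "eventually (\<lambda>x. 0 < g x) F"
  shows "eventually (\<lambda>x. f x < c) F"
proof -
  have "eventually (\<lambda>x. norm (f x - (c - k * g x)) \<le> k / 2 * norm (g x)) F"
    by (rule landau_o.smallD[OF assms(1)]) (use assms(2) in simp)
  with assms(3) show ?thesis
  proof eventually_elim
    case (elim x)
    have "0 < k * g x" using assms(2) elim(1) by simp
    with elim show ?case unfolding real_norm_def by arith
  qed
qed

theorem mainTheorem5:
  shows "(\<lambda>n::nat. ell (n + 2) / ell (n + 1) + ell n / ell (n + 1)
            - (2 - 1 / (2 * real n ^ 3)))
           \<in> o[at_top](\<lambda>n. 1 / real n ^ 3)
       \<and> (\<forall>\<^sub>F n in at_top. ell (n + 2) - ell (n + 1) < ell (n + 1) - ell n)"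
proof
  have "eventually (\<lambda>n. ell (n + 2) / ell (n + 1) + ell n / ell (n + 1) < 2) at_top"
  proof (rule eventually_less_of_smallo_expansion[where k = "1 / 2" and g = "\<lambda>n. 1 / real n ^ 3"])
    show "(\<lambda>n. ell (n + 2) / ell (n + 1) + ell n / ell (n + 1) - (2 - 1 / 2 * (1 / real n ^ 3)))
            \<in> o(\<lambda>n. 1 / real n ^ 3)"
      using ell_ratio_sum_expansion by simp
    show "eventually (\<lambda>n. 0 < 1 / real n ^ 3) at_top"
      by real_asymp
  qed simp
  then show "\<forall>\<^sub>F n in at_top. ell (n + 2) - ell (n + 1) < ell (n + 1) - ell n"
  proof eventually_elim
    case (elim n)
    then show ?case using ell_pos[of "n + 1"] by (simp add: field_simps)
  qed
qed (fact ell_ratio_sum_expansion)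

end
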